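(* Let $n\geqslant 2$ be an integer. Every tournament $T$ with $2n$ vertices that embeds a transitive tournament with $2n-1$ vertices is decomposable.
   Context: A tournament $T=(V,A)$ is a finite set $V$ with a set $A$ of ordered pairs of distinct vertices such that for all $x\neq y$, exactly one of $(x,y),(y,x)$ lies in $A$; write $x\to y$ for $(x,y)\in A$. For $X\subseteq V$, $T[X]$ is the induced subtournament. $T$ embeds $T'$ if $T'$ is isomorphic to an induced subtournament of $T$. A tournament is transitive if $x\to y$ and $y\to z$ imply $x\to z$. A subset $I\subseteq V$ is an interval of $T$ if for every $x\in V\setminus I$, either $x\to a$ for all $a\in I$ or $a\to x$ for all $a\in I$. The sets $\varnothing$, $V$ and singletons are trivial intervals. A tournament with at least 3 vertices is indecomposable if all its intervals are trivial, and decomposable otherwise. *)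

theory Defs
  imports Main
begin

definition tournament :: "'a set \<Rightarrow> ('a \<times> 'a) set \<Rightarrow> bool" where
  "tournament V A \<longleftrightarrow> finite V \<and> A \<subseteq> V \<times> V \<and>
     (\<forall>x\<in>V. \<forall>y\<in>V. x \<noteq> y \<longrightarrow> ((x,y) \<in> A \<longleftrightarrow> (y,x) \<notin> A)) \<and>
     (\<forall>x. (x,x) \<notin> A)"

definition induced :: "('a \<times> 'a) set \<Rightarrow> 'a set \<Rightarrow> ('a \<times> 'a) set" where
  "induced A X = A \<inter> (X \<times> X)"

definition embeds :: "'a set \<Rightarrow> ('a \<times> 'a) set \<Rightarrow> 'b set \<Rightarrow> ('b \<times> 'b) set \<Rightarrow> bool" where
  "embeds V A V' A' \<longleftrightarrow> (\<exists>X f. X \<subseteq> V \<and> bij_betw f V' X \<and>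
     (\<forall>x\<in>V'. \<forall>y\<in>V'. (x,y) \<in> A' \<longleftrightarrow> (f x, f y) \<in> induced A X))"

definition transitive_tournament :: "'a set \<Rightarrow> ('a \<times> 'a) set \<Rightarrow> bool" where
  "transitive_tournament V A \<longleftrightarrow> tournament V A \<and>
     (\<forall>x y z. (x,y) \<in> A \<and> (y,z) \<in> A \<longrightarrow> (x,z) \<in> A)"

definition is_interval :: "'a set \<Rightarrow> ('a \<times> 'a) set \<Rightarrow> 'a set \<Rightarrow> bool" where
  "is_interval V A I \<longleftrightarrow> I \<subseteq> V \<and>
     (\<forall>x\<in>V - I. (\<forall>a\<in>I. (x,a) \<in> A) \<or> (\<forall>a\<in>I. (a,x) \<in> A))"

definition trivial_interval :: "'a set \<Rightarrow> 'a set \<Rightarrow> bool" where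
  "trivial_interval V I \<longleftrightarrow> I = {} \<or> I = V \<or> (\<exists>x. I = {x})"

definition indecomposable :: "'a set \<Rightarrow> ('a \<times> 'a) set \<Rightarrow> bool" where
  "indecomposable V A \<longleftrightarrow> card V \<ge> 3 \<and>
     (\<forall>I. is_interval V A I \<longrightarrow> trivial_interval V I)"

definition decomposable :: "'a set \<Rightarrow> ('a \<times> 'a) set \<Rightarrow> bool" where
  "decomposable V A \<longleftrightarrow> card V \<ge> 3 \<and> \<not> indecomposable V A"

end

theory Submission
  imports Defs
begin

text \<open>
  The embedded transitive subtournament lists all but one vertex \<open>v\<close> as a chain
  \<open>g 0 \<rightarrow> g 1 \<rightarrow> \<dots> \<rightarrow> g (2n - 2)\<close>. If \<open>v \<rightarrow> g (2n - 2)\<close>, the top of the chain is a sink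
  and its complement is an interval; dually if \<open>g 0 \<rightarrow> v\<close>. Otherwise \<open>v \<rightarrow> g 0\<close> but not
  \<open>v \<rightarrow> g (2n - 2)\<close>, and since the chain has odd length, the relation of \<open>v\<close> to \<open>g i\<close>
  cannot alternate all along it: some consecutive pair \<open>g i, g (i + 1)\<close> is treated alike by
  \<open>v\<close>, and then \<open>{g i, g (i + 1)}\<close> is an interval.
\<close>

lemma tournament_induced:
  assumes "tournament V A" and "X \<subseteq> V"
  shows "tournament X (induced A X)"
proof -
  have "finite X"
    using assms finite_subset unfolding tournament_def by blast
  moreover have "\<forall>x\<in>X. \<forall>y\<in>X. x \<noteq> y \<longrightarrow> ((x, y) \<in> A \<inter> X \<times> X \<longleftrightarrow> (y, x) \<notin> A \<inter> X \<times> X)"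
    using assms unfolding tournament_def by blast
  ultimately show ?thesis
    using assms unfolding tournament_def induced_def by blast
qed

lemma transitive_subtournament_of_embeds:
  assumes "tournament V A" and "transitive_tournament V' A'" and "embeds V A V' A'"
  obtains X where "X \<subseteq> V" and "card X = card V'"
    and "transitive_tournament X (induced A X)"
proof -
  obtain X f where XV: "X \<subseteq> V" and f: "bij_betw f V' X"
    and hom: "\<forall>x\<in>V'. \<forall>y\<in>V'. (x, y) \<in> A' \<longleftrightarrow> (f x, f y) \<in> induced A X"
    using assms(3) unfolding embeds_def by blast
  have "(x, z) \<in> induced A X"
    if xy: "(x, y) \<in> induced A X" and yz: "(y, z) \<in> induced A X" for x y z
  proof -
    have "x \<in> f ` V'" "y \<in> f ` V'" "z \<in> f ` V'"
      using xy yz f unfolding induced_def bij_betw_def by auto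
    then obtain a b c where abc: "a \<in> V'" "b \<in> V'" "c \<in> V'" and "x = f a" "y = f b" "z = f c"
      by blast
    then have "(a, b) \<in> A'" "(b, c) \<in> A'"
      using hom xy yz by auto
    then have "(a, c) \<in> A'"
      using assms(2) unfolding transitive_tournament_def by blast
    then show ?thesis
      using hom abc \<open>x = f a\<close> \<open>z = f c\<close> by auto
  qed
  then have "transitive_tournament X (induced A X)"
    using tournament_induced[OF assms(1) XV] by (auto simp: transitive_tournament_def)
  with XV bij_betw_same_card[OF f] show thesis using that by simp
qed

lemma transitive_tournament_enumeration:
  assumes "transitive_tournament X R"
  obtains g where "bij_betw g {..<card X} X"
    and "\<And>i j. i < card X \<Longrightarrow> j < card X \<Longrightarrow> (g i, g j) \<in> R \<longleftrightarrow> i < j"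
proof -
  have fin: "finite X" and RX: "R \<subseteq> X \<times> X" and irrefl: "\<And>x. (x, x) \<notin> R"
    and total: "\<And>x y. x \<in> X \<Longrightarrow> y \<in> X \<Longrightarrow> x \<noteq> y \<Longrightarrow> (x, y) \<in> R \<or> (y, x) \<in> R"
    and trans: "\<And>x y z. (x, y) \<in> R \<Longrightarrow> (y, z) \<in> R \<Longrightarrow> (x, z) \<in> R"
    using assms unfolding transitive_tournament_def tournament_def by blast+
  define rank where "rank x = card {y \<in> X. (y, x) \<in> R}" for x
  have rank_less: "rank x < rank y" if "(x, y) \<in> R" for x y
  proof -
    have "{z \<in> X. (z, x) \<in> R} \<subset> {z \<in> X. (z, y) \<in> R}"
      using that RX trans irrefl by blast
    then show ?thesis
      unfolding rank_def using fin by (simp add: psubset_card_mono)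
  qed
  have inj: "inj_on rank X"
    by (rule inj_onI) (metis total rank_less less_irrefl)
  have "rank ` X \<subseteq> {..<card X}"
  proof
    fix k assume "k \<in> rank ` X"
    then obtain x where "x \<in> X" "k = rank x" by blast
    moreover have "{z \<in> X. (z, x) \<in> R} \<subset> X" using \<open>x \<in> X\<close> irrefl by blast
    ultimately show "k \<in> {..<card X}"
      unfolding rank_def using fin by (simp add: psubset_card_mono)
  qed
  then have "rank ` X = {..<card X}"
    using inj by (simp add: card_image card_subset_eq)
  then have bij: "bij_betw rank X {..<card X}"
    using inj by (simp add: bij_betw_def)
  define g where "g = inv_into X rank"
  have gX: "g i \<in> X" and rank_g: "rank (g i) = i" if "i < card X" for i
    using that bij unfolding g_def
    by (auto simp: bij_betw_def inv_into_into f_inv_into_f)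
  show thesis
  proof
    show "bij_betw g {..<card X} X"
      unfolding g_def by (rule bij_betw_inv_into[OF bij])
  next
    fix i j assume "i < card X" "j < card X"
    then show "(g i, g j) \<in> R \<longleftrightarrow> i < j"
      using total[of "g i" "g j"] rank_less[of "g i" "g j"] rank_less[of "g j" "g i"]
        gX rank_g by (metis less_asym less_irrefl)
  qed
qed

lemma transitive_subtournament_chain:
  assumes "transitive_tournament X (induced A X)"
  obtains g where "bij_betw g {..<card X} X"
    and "\<And>i j. i < card X \<Longrightarrow> j < card X \<Longrightarrow> (g i, g j) \<in> A \<longleftrightarrow> i < j"
proof -
  obtain g where g: "bij_betw g {..<card X} X"
    and arc: "\<And>i j. i < card X \<Longrightarrow> j < card X \<Longrightarrow> (g i, g j) \<in> induced A X \<longleftrightarrow> i < j"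
    using transitive_tournament_enumeration[OF assms] by blast
  have "(g i, g j) \<in> A \<longleftrightarrow> i < j" if "i < card X" "j < card X" for i j
    using arc[OF that] bij_betw_apply[OF g] that by (simp add: induced_def)
  with g show thesis
    using that by blast
qed

lemma is_interval_pair:
  assumes "tournament V A" and "a \<in> V" and "b \<in> V"
    and "\<And>x. x \<in> V - {a, b} \<Longrightarrow> (x, a) \<in> A \<longleftrightarrow> (x, b) \<in> A"
  shows "is_interval V A {a, b}"
  using assms unfolding is_interval_def tournament_def by blast

lemma is_interval_Diff_singleton:
  assumes "(\<forall>x\<in>V - {m}. (x, m) \<in> A) \<or> (\<forall>x\<in>V - {m}. (m, x) \<in> A)"
  shows "is_interval V A (V - {m})"
  using assms unfolding is_interval_def by auto

lemma not_trivial_interval: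
  assumes "2 \<le> card I" and "card I < card V"
  shows "\<not> trivial_interval V I"
  using assms unfolding trivial_interval_def by auto

lemma decomposableI:
  assumes "card V \<ge> 3" and "is_interval V A I" and "\<not> trivial_interval V I"
  shows "decomposable V A"
  using assms unfolding decomposable_def indecomposable_def by blast

lemma alternating_parity:
  assumes "\<And>i. i < k \<Longrightarrow> p i \<noteq> p (Suc i)"
  shows "p k \<longleftrightarrow> (p 0 \<longleftrightarrow> even k)"
proof -
  have "p i \<longleftrightarrow> (p 0 \<longleftrightarrow> even i)" if "i \<le> k" for i
    using that
  proof (induction i)
    case 0
    then show ?case by simp
  next
    case (Suc i)
    have "p i \<noteq> p (Suc i)"
      using assms Suc.prems by simp
    with Suc show ?case by auto
  qed
  then show ?thesis
    using le_refl by blast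
qed

lemma odd_length_equal_neighbours:
  fixes N :: nat
  assumes "odd N" and "p 0" and "\<not> p (N - 1)"
  obtains i where "Suc i < N" and "p i \<longleftrightarrow> p (Suc i)"
proof -
  have "\<exists>i. Suc i < N \<and> (p i \<longleftrightarrow> p (Suc i))"
  proof (rule ccontr)
    assume "\<nexists>i. Suc i < N \<and> (p i \<longleftrightarrow> p (Suc i))"
    then have "p (N - 1) \<longleftrightarrow> (p 0 \<longleftrightarrow> even (N - 1))"
      by (intro alternating_parity) auto
    with assms show False by simp
  qed
  with that show thesis by blast
qed

lemma is_interval_consecutive_pair:
  assumes tour: "tournament V A" and V: "V = insert v (g ` {..<N})"
    and g_arc: "\<And>i j. i < N \<Longrightarrow> j < N \<Longrightarrow> (g i, g j) \<in> A \<longleftrightarrow> i < j"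
    and i: "Suc i < N" and v_alike: "(v, g i) \<in> A \<longleftrightarrow> (v, g (Suc i)) \<in> A"
  shows "is_interval V A {g i, g (Suc i)}"
proof (rule is_interval_pair[OF tour])
  fix x assume x: "x \<in> V - {g i, g (Suc i)}"
  show "(x, g i) \<in> A \<longleftrightarrow> (x, g (Suc i)) \<in> A"
  proof (cases "x = v")
    case True
    have "(v, g i) \<in> A \<longleftrightarrow> (g i, v) \<notin> A" "(v, g (Suc i)) \<in> A \<longleftrightarrow> (g (Suc i), v) \<notin> A"
      using tour x i True V unfolding tournament_def by auto
    with True v_alike show ?thesis by blast
  next
    case False
    then obtain k where "k < N" "x = g k" "k \<noteq> i" "k \<noteq> Suc i"
      using x V by auto
    then show ?thesis
      using g_arc i by auto
  qed
qed (use V i in auto)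

lemma is_interval_Diff_chain_last:
  fixes N :: nat
  assumes V: "V = insert v (g ` {..<N})"
    and g_arc: "\<And>i j. i < N \<Longrightarrow> j < N \<Longrightarrow> (g i, g j) \<in> A \<longleftrightarrow> i < j"
    and v_last: "(v, g (N - 1)) \<in> A"
  shows "is_interval V A (V - {g (N - 1)})"
proof (intro is_interval_Diff_singleton disjI1 ballI)
  fix x assume "x \<in> V - {g (N - 1)}"
  with V consider "x = v" | k where "k < N" "k \<noteq> N - 1" "x = g k"
    by auto
  then show "(x, g (N - 1)) \<in> A"
    using v_last g_arc by cases auto
qed

lemma is_interval_Diff_chain_first:
  fixes N :: nat
  assumes V: "V = insert v (g ` {..<N})"
    and g_arc: "\<And>i j. i < N \<Longrightarrow> j < N \<Longrightarrow> (g i, g j) \<in> A \<longleftrightarrow> i < j"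
    and first_v: "(g 0, v) \<in> A"
  shows "is_interval V A (V - {g 0})"
proof (intro is_interval_Diff_singleton disjI2 ballI)
  fix x assume "x \<in> V - {g 0}"
  with V consider "x = v" | k where "k < N" "k \<noteq> 0" "x = g k"
    by auto
  then show "(g 0, x) \<in> A"
    using first_v g_arc by cases auto
qed

lemma decomposable_chain_plus_vertex:
  fixes N :: nat
  assumes tour: "tournament V A" and V: "V = insert v X" and "v \<notin> X"
    and g: "bij_betw g {..<N} X"
    and g_arc: "\<And>i j. i < N \<Longrightarrow> j < N \<Longrightarrow> (g i, g j) \<in> A \<longleftrightarrow> i < j"
    and "odd N" and "N \<ge> 3"
  shows "decomposable V A"
proof -
  have gX: "g i \<in> X" if "i < N" for i
    using g that by (simp add: bij_betw_apply)
  have V_g: "V = insert v (g ` {..<N})"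
    using g V by (simp add: bij_betw_def)
  have finV: "finite V"
    using tour by (simp add: tournament_def)
  have N: "card V = Suc N" "N \<ge> 3" "odd N"
    using assms finV bij_betw_same_card[OF g] by auto
  have v_g: "(v, g i) \<in> A \<longleftrightarrow> (g i, v) \<notin> A" if "i < N" for i
    using tour gX[OF that] V \<open>v \<notin> X\<close> unfolding tournament_def by auto
  have co_vertex: "\<not> trivial_interval V (V - {g i})" if "i < N" for i
  proof (rule not_trivial_interval)
    have "g i \<in> V"
      using gX[OF that] V by blast
    then show "card (V - {g i}) < card V" and "2 \<le> card (V - {g i})"
      using finV N by (simp_all add: card_Diff_singleton)
  qed
  consider (sink) "(v, g (N - 1)) \<in> A" | (source) "(g 0, v) \<in> A"
    | (between) "(v, g 0) \<in> A" "(v, g (N - 1)) \<notin> A"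
    using v_g[of 0] N by auto
  then have "\<exists>I. is_interval V A I \<and> \<not> trivial_interval V I"
  proof cases
    case sink
    then show ?thesis
      using is_interval_Diff_chain_last[OF V_g g_arc] co_vertex[of "N - 1"] N by auto
  next
    case source
    then show ?thesis
      using is_interval_Diff_chain_first[OF V_g g_arc] co_vertex[of 0] N by auto
  next
    case between
    then obtain i where i: "Suc i < N" and v_alike: "(v, g i) \<in> A \<longleftrightarrow> (v, g (Suc i)) \<in> A"
      using odd_length_equal_neighbours[of N "\<lambda>i. (v, g i) \<in> A"] N by blast
    have "is_interval V A {g i, g (Suc i)}"
      by (rule is_interval_consecutive_pair[OF tour V_g g_arc i v_alike])
    moreover have "\<not> trivial_interval V {g i, g (Suc i)}"
    proof (rule not_trivial_interval)
      have "g i \<noteq> g (Suc i)"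
        using g_arc[of i i] g_arc[of i "Suc i"] i by auto
      then show "2 \<le> card {g i, g (Suc i)}" and "card {g i, g (Suc i)} < card V"
        using N by auto
    qed
    ultimately show ?thesis
      by blast
  qed
  then obtain I where "is_interval V A I" and "\<not> trivial_interval V I"
    by blast
  with N show ?thesis
    by (intro decomposableI) simp_all
qed

theorem mainTheorem1:
  fixes n :: nat and V :: "'a set" and A :: "('a \<times> 'a) set"
    and V' :: "'b set" and A' :: "('b \<times> 'b) set"
  assumes "n \<ge> 2"
    and "tournament V A" and "card V = 2 * n"
    and "transitive_tournament V' A'" and "card V' = 2 * n - 1"
    and "embeds V A V' A'"
  shows "decomposable V A"
proof -
  obtain X where XV: "X \<subseteq> V" and cardX: "card X = 2 * n - 1"
    and trans: "transitive_tournament X (induced A X)"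
    using transitive_subtournament_of_embeds assms(2,4,5,6) by metis
  have "finite V"
    using assms(2) by (simp add: tournament_def)
  then have "card (V - X) = 1"
    using XV cardX assms(1,3) by (simp add: card_Diff_subset finite_subset)
  then obtain v where "V - X = {v}"
    by (rule card_1_singletonE)
  then have "V = insert v X" and "v \<notin> X"
    using XV by auto
  moreover obtain g where "bij_betw g {..<card X} X"
    and "\<And>i j. i < card X \<Longrightarrow> j < card X \<Longrightarrow> (g i, g j) \<in> A \<longleftrightarrow> i < j"
    using transitive_subtournament_chain[OF trans] by blast
  moreover have "odd (card X)" and "card X \<ge> 3"
    using cardX assms(1) by auto
  ultimately show ?thesis
    using decomposable_chain_plus_vertex[OF assms(2)] by blast
qed

end
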